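(* In the following setting: $n$ training samples with labels in $\{1,\dots,K\}$, indicator matrix $F\in\mathbb{R}^{K\times n}$, with the same number of samples in every class; basis $G_1,\dots,G_r$ ($r\le n$) a subset of the training samples with the same number ($\ge1$) of basis vectors in every class; $F_{G_i}$ the class indicator of $G_i$; $\tilde W\in\mathbb{R}^{r\times n}$ entrywise nonnegative, columns summing to one, full row rank, with $\tilde W_{ij}=0$ whenever $F_{G_i}\neq F_j$; $\tilde W'=\tilde W+\Delta W$ with $\Delta W\in\mathbb{R}^{r\times n}$; $\xi=\|\tilde W^\dagger\|_2\|\Delta W\|_2$, $\delta=\|\Delta W\|_F/\|\tilde W\|_F$; $X=F\tilde W^\dagger$, $X'=F\tilde W'^\dagger$, $\gamma=\|X\|_F^2\|\tilde W\|_F^2/\|X\tilde W\|_F^2$, $\epsilon'=\|F-X'\tilde W'\|_F^2/\|X'\tilde W'\|_F^2+1$, $\gamma'=\|X'\|_F^2\|\tilde W'\|_F^2/\|X'\tilde W'\|_F^2$. If $\xi<1$, then $$\epsilon'\le\frac{\xi^2}{(1-\xi)^2}+1,\qquad \gamma'\le\gamma(1+\delta)^2\Big(1+\frac{2\xi}{1-\xi}\Big)^2\le\gamma\frac{(1+\xi)^4}{(1-\xi)^2}.$$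
   Context: The columns of $F$ are standard basis vectors of $\mathbb{R}^K$: $F_j=e_k$ iff sample $j$ is in class $k$. $\|\cdot\|_2$ of a matrix is the spectral norm; $M^\dagger$ is the Moore–Penrose pseudo-inverse. *)

theory Defs
  imports "HOL-Analysis.Analysis"
begin

text \<open>Matrices are elements of real^'c^'r (rows indexed by 'r, columns by 'c).\<close>

definition frob_norm :: "real^'c^'r \<Rightarrow> real" where
  "frob_norm A = sqrt (\<Sum>i\<in>UNIV. \<Sum>j\<in>UNIV. (A $ i $ j)^2)"

definition spec_norm :: "real^'c^'r \<Rightarrow> real" where
  "spec_norm A = onorm (\<lambda>x. A *v x)"

definition pinv :: "real^'c^'r \<Rightarrow> real^'r^'c" where
  "pinv A = (THE X. A ** X ** A = A \<and> X ** A ** X = X \<and>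
                    transpose (A ** X) = A ** X \<and> transpose (X ** A) = X ** A)"

definition indicator_mat :: "('n \<Rightarrow> 'k) \<Rightarrow> real^'n^'k" where
  "indicator_mat label = (\<chi> k j. if label j = k then 1 else 0)"

end

theory Submission
  imports Defs
begin

text \<open>The support condition and the unit column sums give \<open>F = F\<^sub>G W\<close>, where \<open>F\<^sub>G\<close> is the
class indicator matrix of the basis, and full row rank gives \<open>W W\<^sup>\<dagger> = I\<close>; hence \<open>X = F\<^sub>G\<close> and
\<open>X W = F\<close>. The lower bound \<open>\<parallel>y\<parallel> \<le> \<parallel>W\<^sup>\<dagger>\<parallel>\<^sub>2 \<parallel>W\<^sup>T y\<parallel>\<close> survives the perturbation up to the
factor \<open>1 - \<xi>\<close>, so \<open>W' = W + \<Delta>W\<close> still has full row rank and \<open>\<parallel>W'\<^sup>\<dagger>\<parallel>\<^sub>2 \<le> \<parallel>W\<^sup>\<dagger>\<parallel>\<^sub>2 / (1 - \<xi>)\<close>.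
With the orthogonal projection \<open>P = W'\<^sup>\<dagger> W'\<close> and \<open>D = F\<^sub>G \<Delta>W\<close> we have \<open>F = F\<^sub>G W' - D\<close>, hence
\<open>F - X' W' = -(D - D P)\<close> and \<open>X' = F\<^sub>G - D P W'\<^sup>\<dagger>\<close>. Pythagoras splits
\<open>\<parallel>D\<parallel>\<^sub>F\<^sup>2 \<le> \<parallel>F\<^sub>G\<parallel>\<^sub>F\<^sup>2 \<parallel>\<Delta>W\<parallel>\<^sub>2\<^sup>2\<close> into \<open>\<parallel>D P\<parallel>\<^sub>F\<^sup>2 + \<parallel>D - D P\<parallel>\<^sub>F\<^sup>2\<close>: the first part enlarges
\<open>\<parallel>X'\<parallel>\<^sub>F\<close>, the second is the residual and shrinks \<open>\<parallel>X' W'\<parallel>\<^sub>F\<^sup>2 = \<parallel>F\<parallel>\<^sub>F\<^sup>2 - \<parallel>D - D P\<parallel>\<^sub>F\<^sup>2\<close>.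
Trading the two against each other is the elementary inequality
\<open>(1 - \<xi> + u)\<^sup>2 \<le> (1 + \<xi>)\<^sup>2 (1 - v\<^sup>2)\<close> for \<open>u\<^sup>2 + v\<^sup>2 \<le> \<xi>\<^sup>2\<close>.\<close>

lemma matrix_diff_rdistrib: "(A - B) ** C = A ** C - B ** C"
  for A B :: "'a::ring_1^'n^'m"
  by (vector matrix_matrix_mult_def sum_subtractf left_diff_distrib)

lemma transpose_add: "transpose (A + B) = transpose A + transpose B"
  for A B :: "'a::semiring_1^'n^'m"
  by (simp add: transpose_def vec_eq_iff)

lemma frob_norm_eq_norm: "frob_norm A = norm A"
  unfolding frob_norm_def norm_vec_def L2_set_def by (simp add: sum_nonneg)

lemma norm_power2_eq_sum_rows: "(norm A)^2 = (\<Sum>i\<in>UNIV. (norm (A $ i))^2)"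
  for A :: "real^'n^'m"
  unfolding norm_vec_def[of A] L2_set_def by (simp add: sum_nonneg)

lemma matrix_mult_row: "(A ** B) $ i = transpose B *v A $ i"
  for A :: "real^'n^'m" and B :: "real^'p^'n"
  by (auto simp: vec_eq_iff matrix_matrix_mult_def matrix_vector_mult_def transpose_def
      mult.commute intro!: sum.cong)

lemma row_eq_transpose_mult_axis: "A $ i = transpose A *v axis i 1"
  for A :: "real^'n^'m"
  by (simp add: vec_eq_iff matrix_vector_mult_def transpose_def axis_def if_distrib if_distribR
      cong: if_cong)

lemma inner_matrix_mult_right: "inner (A ** M) B = inner A (B ** transpose M)"
  for A :: "real^'n^'m" and M :: "real^'p^'n"
  unfolding inner_vec_def[of "A ** M"] inner_vec_def[of A]
  by (simp add: matrix_mult_row dot_lmul_matrix)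

lemma spec_norm_nonneg: "0 \<le> spec_norm M"
  for M :: "real^'n^'m"
  unfolding spec_norm_def by (rule onorm_pos_le) simp

lemma norm_mult_vec_le_spec_norm: "norm (M *v x) \<le> spec_norm M * norm x"
  for M :: "real^'n^'m"
  unfolding spec_norm_def using onorm[of "\<lambda>x. M *v x"] by simp

lemma norm_transpose_mult_vec_le_spec_norm: "norm (transpose M *v y) \<le> spec_norm M * norm y"
  for M :: "real^'n^'m"
proof -
  let ?z = "transpose M *v y"
  have "(norm ?z)^2 = inner y (M *v ?z)"
    by (simp add: power2_norm_eq_inner dot_lmul_matrix)
  also have "\<dots> \<le> norm y * norm (M *v ?z)" by (rule norm_cauchy_schwarz)
  also have "\<dots> \<le> norm y * (spec_norm M * norm ?z)"
    by (intro mult_left_mono norm_mult_vec_le_spec_norm) simp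
  finally have "norm ?z * norm ?z \<le> (spec_norm M * norm y) * norm ?z"
    by (simp add: power2_eq_square mult_ac)
  then show ?thesis
    using spec_norm_nonneg[of M] by (cases "norm ?z = 0") (auto simp: mult_le_cancel_right)
qed

lemma norm_row_le_spec_norm: "norm (M $ i) \<le> spec_norm M"
  for M :: "real^'n^'m"
  using norm_transpose_mult_vec_le_spec_norm[of M "axis i 1"]
  by (simp add: row_eq_transpose_mult_axis[of M i])

lemma norm_matrix_mult_le_spec_norm: "norm (A ** B) \<le> norm A * spec_norm B"
  for A :: "real^'n^'m" and B :: "real^'p^'n"
proof -
  have "(norm (A ** B))^2 \<le> (\<Sum>i\<in>UNIV. (spec_norm B * norm (A $ i))^2)"
    unfolding norm_power2_eq_sum_rows[of "A ** B"] matrix_mult_row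
    by (intro sum_mono power_mono norm_transpose_mult_vec_le_spec_norm) simp
  also have "\<dots> = (norm A * spec_norm B)^2"
    by (simp add: norm_power2_eq_sum_rows[of A] power_mult_distrib sum_distrib_left mult.commute)
  finally show ?thesis
    by (rule power2_le_imp_le) (simp add: spec_norm_nonneg)
qed

lemma norm_power2_orthogonal_projection:
  fixes A :: "real^'n^'m" and P :: "real^'n^'n"
  assumes "transpose P = P" "P ** P = P"
  shows "(norm A)^2 = (norm (A ** P))^2 + (norm (A - A ** P))^2"
proof -
  have "inner (A ** P) (A - A ** P) = inner A ((A - A ** P) ** P)"
    using inner_matrix_mult_right[of A P "A - A ** P"] assms by simp
  also have "\<dots> = 0"
    using assms by (simp add: matrix_diff_rdistrib matrix_mul_assoc[symmetric])
  finally have "orthogonal (A ** P) (A - A ** P)" by (simp add: orthogonal_def)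
  from norm_add_Pythagorean[OF this] show ?thesis by simp
qed

lemma penrose_unique:
  fixes A :: "real^'c^'r" and X Y :: "real^'r^'c"
  assumes X: "A ** X ** A = A" "X ** A ** X = X"
      "transpose (A ** X) = A ** X" "transpose (X ** A) = X ** A"
    and Y: "A ** Y ** A = A" "Y ** A ** Y = Y"
      "transpose (A ** Y) = A ** Y" "transpose (Y ** A) = Y ** A"
  shows "X = Y"
proof -
  have "X ** A = (X ** A) ** (Y ** A)" by (metis Y(1) matrix_mul_assoc)
  also have "\<dots> = transpose (Y ** A ** X ** A)" by (metis X(4) Y(4) matrix_transpose_mul matrix_mul_assoc)
  also have "\<dots> = Y ** A" by (metis X(1) Y(4) matrix_mul_assoc)
  finally have XA: "X ** A = Y ** A" .
  have "A ** X = (A ** Y) ** (A ** X)" by (metis Y(1) matrix_mul_assoc)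
  also have "\<dots> = transpose (A ** X ** A ** Y)" by (metis X(3) Y(3) matrix_transpose_mul matrix_mul_assoc)
  also have "\<dots> = A ** Y" by (metis X(1) Y(3))
  finally have AX: "A ** X = A ** Y" .
  have "X = Y ** A ** X" using X(2) XA by simp
  also have "\<dots> = Y" using Y(2) AX by (simp add: matrix_mul_assoc[symmetric])
  finally show ?thesis .
qed

lemma pinv_full_row_rank:
  fixes A :: "real^'c^'r"
  assumes "inj ((*v) (transpose A))"
  shows "A ** pinv A = mat 1" "transpose (pinv A ** A) = pinv A ** A"
proof -
  define S where "S = A ** transpose A"
  have S_symmetric: "transpose S = S" by (simp add: S_def matrix_transpose_mul)
  have "inj ((*v) S)"
  proof (rule injI)
    fix x y assume "S *v x = S *v y"
    then have "S *v (x - y) = 0" by (simp add: matrix_vector_mult_diff_distrib)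
    moreover have "inner (transpose A *v (x - y)) (transpose A *v (x - y)) = inner (x - y) (S *v (x - y))"
      by (simp add: S_def dot_lmul_matrix matrix_vector_mul_assoc[symmetric])
    ultimately have "transpose A *v (x - y) = 0" by simp
    with assms show "x = y" by (simp add: inj_def matrix_vector_mult_diff_distrib)
  qed
  then obtain B where "B ** S = mat 1" using matrix_left_invertible_injective by blast
  then have SB: "S ** B = mat 1" using matrix_left_right_inverse by blast
  have "transpose B = transpose B ** (S ** B)" by (simp add: SB)
  also have "\<dots> = transpose (S ** B) ** B"
    by (simp add: matrix_mul_assoc matrix_transpose_mul S_symmetric)
  finally have B_symmetric: "transpose B = B" by (simp add: SB)
  define Y where "Y = transpose A ** B"
  have AY: "A ** Y = mat 1" by (simp add: Y_def matrix_mul_assoc S_def[symmetric] SB)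
  have YA: "transpose (Y ** A) = Y ** A"
    by (simp add: Y_def matrix_transpose_mul B_symmetric matrix_mul_assoc)
  have YAY: "Y ** A ** Y = Y" by (metis AY matrix_mul_assoc matrix_mul_rid)
  have "pinv A = Y"
    unfolding pinv_def
  proof (rule the_equality)
    show "A ** Y ** A = A \<and> Y ** A ** Y = Y \<and> transpose (A ** Y) = A ** Y \<and> transpose (Y ** A) = Y ** A"
      using AY YA YAY by simp
  next
    fix X
    assume "A ** X ** A = A \<and> X ** A ** X = X \<and> transpose (A ** X) = A ** X \<and> transpose (X ** A) = X ** A"
    then show "X = Y"
      using penrose_unique[of A X Y] YA YAY by (simp only: AY transpose_mat matrix_mul_lid simp_thms)
  qed
  then show "A ** pinv A = mat 1" "transpose (pinv A ** A) = pinv A ** A"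
    by (simp_all only: AY YA)
qed

lemma norm_le_spec_norm_pinv_mult:
  fixes A :: "real^'c^'r"
  assumes "A ** pinv A = mat 1"
  shows "norm y \<le> spec_norm (pinv A) * norm (transpose A *v y)"
proof -
  have "transpose (pinv A) *v (transpose A *v y) = y"
    using assms by (simp add: vector_matrix_mul_assoc)
  then show ?thesis
    using norm_transpose_mult_vec_le_spec_norm[of "pinv A" "transpose A *v y"] by simp
qed

lemma inj_transpose_if_bounded_below:
  fixes A :: "real^'c^'r"
  assumes "0 < c" "\<And>y. c * norm y \<le> norm (transpose A *v y)"
  shows "inj ((*v) (transpose A))"
proof (rule injI)
  fix x y assume "transpose A *v x = transpose A *v y"
  then have "c * norm (x - y) \<le> 0"
    using assms(2)[of "x - y"] by (simp add: matrix_vector_mult_diff_distrib)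
  with assms(1) show "x = y" by (simp add: mult_le_0_iff)
qed

lemma spec_norm_pinv_le:
  fixes A :: "real^'c^'r"
  assumes c: "0 < c" and bounded_below: "\<And>y. c * norm y \<le> norm (transpose A *v y)"
  shows "spec_norm (pinv A) \<le> 1 / c"
  unfolding spec_norm_def
proof (rule onorm_le)
  fix z
  let ?Q = "pinv A"
  define x where "x = ?Q *v z"
  define y where "y = transpose ?Q *v x"
  note inj = inj_transpose_if_bounded_below[OF c bounded_below]
  have AQ: "A ** ?Q = mat 1" and QA: "transpose (?Q ** A) = ?Q ** A"
    using pinv_full_row_rank[OF inj] by simp_all
  have "?Q = transpose A ** (transpose ?Q ** ?Q)"
    by (metis AQ QA matrix_mul_assoc matrix_mul_rid matrix_transpose_mul)
  then have x_eq: "x = transpose A *v y"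
    unfolding x_def y_def by (metis matrix_vector_mul_assoc)
  have "(norm x)^2 = inner y (A *v x)"
    by (simp add: power2_norm_eq_inner x_eq dot_lmul_matrix)
  also have "A *v x = z" by (simp add: x_def matrix_vector_mul_assoc AQ)
  also have "inner y z \<le> norm y * norm z" by (rule norm_cauchy_schwarz)
  also have "\<dots> \<le> norm x / c * norm z"
    using bounded_below[of y] c by (intro mult_right_mono) (simp_all add: x_eq field_simps)
  finally have "norm x * norm x \<le> (norm z / c) * norm x"
    by (simp add: power2_eq_square mult_ac)
  then have "norm x \<le> norm z / c"
    using c by (cases "norm x = 0") (auto intro: mult_right_le_imp_le)
  then show "norm (?Q *v z) \<le> 1 / c * norm z" by (simp add: x_def)
qed

lemma one_minus_plus_power2_le:
  fixes s u v :: real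
  assumes "0 \<le> s" "s < 1" "0 \<le> u" "0 \<le> v" "u^2 + v^2 \<le> s^2"
  shows "(1 - s + u)^2 \<le> (1 + s)^2 * (1 - v^2)"
proof -
  have "u \<le> s"
  proof (rule power2_le_imp_le)
    show "u^2 \<le> s^2" using assms(5) zero_le_power2[of v] by linarith
  qed (use assms in auto)
  have "0 \<le> (1 + s)^2 - 1"
    using one_le_power[of "1 + s" 2] assms by simp
  have "(1 + s)^2 * (1 - s^2 + u^2) - (1 - s + u)^2
      = (1 - s) * (1 + s) * ((1 + s)^2 - 1) + u^2 * ((1 + s)^2 - 1) + 2 * (s - u) * (1 - s)"
    by (simp add: power2_eq_square algebra_simps)
  also have "\<dots> \<ge> 0"
    using assms \<open>u \<le> s\<close> \<open>0 \<le> (1 + s)^2 - 1\<close> by (simp add: add_nonneg_nonneg)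
  finally have "(1 - s + u)^2 \<le> (1 + s)^2 * (1 - s^2 + u^2)" by simp
  also have "\<dots> \<le> (1 + s)^2 * (1 - v^2)"
    using assms by (intro mult_left_mono) auto
  finally show ?thesis .
qed

lemma ratio_power2_le:
  fixes q f \<xi> :: real
  assumes "0 \<le> q" "q \<le> \<xi> * f" "0 < f" "0 \<le> \<xi>" "\<xi> < 1"
  shows "q^2 / (f^2 - q^2) \<le> \<xi>^2 / (1 - \<xi>)^2"
proof -
  have q2: "q^2 \<le> \<xi>^2 * f^2"
    using assms by (metis power_mono power_mult_distrib)
  have "q < f" using assms by (smt (verit) mult_le_cancel_right1)
  then have "0 < f^2 - q^2" using assms by (simp add: power_strict_mono)
  have "(1 - \<xi>)^2 + \<xi>^2 \<le> 1"
    using assms mult_left_le_one_le[of \<xi> \<xi>] by (simp add: power2_eq_square algebra_simps)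
  then have "q^2 * ((1 - \<xi>)^2 + \<xi>^2) \<le> \<xi>^2 * f^2"
    using q2 mult_left_le[of "(1 - \<xi>)^2 + \<xi>^2" "q^2"] by simp
  then have "q^2 * (1 - \<xi>)^2 \<le> \<xi>^2 * (f^2 - q^2)"
    by (simp add: distrib_left right_diff_distrib mult.commute)
  with \<open>0 < f^2 - q^2\<close> \<open>\<xi> < 1\<close> show ?thesis
    by (subst frac_le_eq) (auto intro!: divide_nonpos_pos mult_pos_pos)
qed

lemma coefficient_ratio_le:
  fixes f c x' p q \<eta> e \<xi> :: real
  assumes "0 < c" "0 < \<eta>" "0 \<le> e" "\<xi> = \<eta> * e" "\<xi> < 1" "0 \<le> p" "0 \<le> q"
    and pq: "p^2 + q^2 \<le> (c * e)^2" and c_le: "c \<le> f * \<eta>"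
    and x': "0 \<le> x'" "x' \<le> c + p * (\<eta> / (1 - \<xi>))"
  shows "x'^2 / (f^2 - q^2) \<le> c^2 / f^2 * ((1 + \<xi>) / (1 - \<xi>))^2"
proof -
  \<comment> \<open>rescale \<open>p\<close> and \<open>q\<close> so that \<open>u\<^sup>2 + v\<^sup>2 \<le> \<xi>\<^sup>2\<close>\<close>
  define u where "u = p * \<eta> / c"
  define v where "v = q * \<eta> / c"
  have "0 \<le> \<xi>" using assms by simp
  have "0 < f * \<eta>" using assms by linarith
  then have "0 < f" using assms by (simp add: zero_less_mult_iff)
  have "0 \<le> u" "0 \<le> v" using assms by (simp_all add: u_def v_def)
  have uv: "u^2 + v^2 \<le> \<xi>^2"
  proof -
    have "u^2 + v^2 = (p^2 + q^2) * \<eta>^2 / c^2"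
      by (simp add: u_def v_def power_divide power_mult_distrib add_divide_distrib algebra_simps)
    also have "\<dots> \<le> (c * e)^2 * \<eta>^2 / c^2" using pq by (intro divide_right_mono mult_right_mono) auto
    also have "\<dots> = \<xi>^2" using assms by (simp add: power_mult_distrib)
    finally show ?thesis .
  qed
  have "\<xi>^2 < 1" using \<open>0 \<le> \<xi>\<close> \<open>\<xi> < 1\<close> power_strict_mono[of \<xi> 1 2] by simp
  then have "v^2 < 1" using uv zero_le_power2[of u] by linarith
  have "1 \<le> \<eta> * f / c" using c_le assms by (simp add: mult.commute)
  from mult_left_mono[OF this \<open>0 \<le> q\<close>] have "q \<le> v * f" by (simp add: v_def)
  then have denominator: "f^2 * (1 - v^2) \<le> f^2 - q^2"
    using assms by (simp add: algebra_simps) (metis power_mono power_mult_distrib)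
  have "p * (\<eta> / (1 - \<xi>)) = c * (u / (1 - \<xi>))" using assms by (simp add: u_def)
  moreover have "c + c * (u / (1 - \<xi>)) = c * ((1 - \<xi> + u) / (1 - \<xi>))"
    using \<open>\<xi> < 1\<close> by (simp add: field_simps)
  ultimately have "x' \<le> c * ((1 - \<xi> + u) / (1 - \<xi>))" using x' by linarith
  then have "x'^2 \<le> c^2 * (1 - \<xi> + u)^2 / (1 - \<xi>)^2"
    using x' by (metis power_mono power_mult_distrib power_divide times_divide_eq_right)
  also have "\<dots> \<le> c^2 * ((1 + \<xi>)^2 * (1 - v^2)) / (1 - \<xi>)^2"
    using one_minus_plus_power2_le[OF \<open>0 \<le> \<xi>\<close> \<open>\<xi> < 1\<close> \<open>0 \<le> u\<close> \<open>0 \<le> v\<close> uv]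
    by (intro divide_right_mono mult_left_mono) auto
  finally have numerator: "x'^2 \<le> c^2 * ((1 + \<xi>)^2 * (1 - v^2)) / (1 - \<xi>)^2" .
  have "x'^2 / (f^2 - q^2) \<le> c^2 * ((1 + \<xi>)^2 * (1 - v^2)) / (1 - \<xi>)^2 / (f^2 * (1 - v^2))"
    using numerator denominator \<open>v^2 < 1\<close> \<open>0 < f\<close> by (intro frac_le) auto
  also have "\<dots> = c^2 / f^2 * ((1 + \<xi>) / (1 - \<xi>))^2"
    using \<open>v^2 < 1\<close> by (simp add: power_divide)
  finally show ?thesis .
qed

lemma indicator_mat_eq_mult:
  fixes label :: "'n::finite \<Rightarrow> 'k::finite" and g :: "'r::finite \<Rightarrow> 'n" and W :: "real^'n^'r"
  assumes colsum: "\<And>j. (\<Sum>i\<in>UNIV. W $ i $ j) = 1"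
    and support: "\<And>i j. label (g i) \<noteq> label j \<Longrightarrow> W $ i $ j = 0"
  shows "indicator_mat label = indicator_mat (label \<circ> g) ** W"
proof -
  have "(if label (g i) = k then W $ i $ j else 0) = (if label j = k then W $ i $ j else 0)" for i j k
    using support[of i j] by auto
  then have "(\<Sum>i\<in>UNIV. (if label (g i) = k then W $ i $ j else 0)) = (if label j = k then 1 else 0)" for k j
    using colsum[of j] by simp
  moreover have "(indicator_mat (label \<circ> g) ** W) $ k $ j
      = (\<Sum>i\<in>UNIV. (if label (g i) = k then W $ i $ j else 0))" for k j
    by (auto simp: indicator_mat_def matrix_matrix_mult_def intro!: sum.cong)
  ultimately show ?thesis
    by (simp add: vec_eq_iff indicator_mat_def)
qed

lemma indicator_mat_nonzero: "indicator_mat f \<noteq> 0"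
  by (auto simp: vec_eq_iff indicator_mat_def intro: exI[of _ "f undefined"])

locale pinv_perturbation =
  fixes C :: "real^'r^'k" and W dW :: "real^'n^'r"
  assumes full_row_rank: "inj ((*v) (transpose W))"
    and C_nonzero: "C \<noteq> 0"
    and xi_less_1: "spec_norm (pinv W) * spec_norm dW < 1"
begin

abbreviation "\<eta> \<equiv> spec_norm (pinv W)"
abbreviation "\<xi> \<equiv> \<eta> * spec_norm dW"
abbreviation "F \<equiv> C ** W"
abbreviation "W' \<equiv> W + dW"
abbreviation "P \<equiv> pinv W' ** W'"
abbreviation "D \<equiv> C ** dW"
abbreviation "X' \<equiv> F ** pinv W'"

lemma W_right_inverse: "W ** pinv W = mat 1"
  using pinv_full_row_rank(1)[OF full_row_rank] .

lemma eta_pos: "0 < \<eta>"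
proof -
  have "1 \<le> \<eta> * norm (transpose W *v axis undefined 1)"
    using norm_le_spec_norm_pinv_mult[OF W_right_inverse, of "axis undefined 1"] by simp
  then show ?thesis using spec_norm_nonneg[of "pinv W"] by (cases "\<eta> = 0") auto
qed

lemma xi_nonneg: "0 \<le> \<xi>"
  using eta_pos spec_norm_nonneg[of dW] by simp

lemma perturbed_bounded_below: "(1 - \<xi>) / \<eta> * norm y \<le> norm (transpose W' *v y)"
proof -
  have "norm (transpose W *v y) \<le> norm (transpose W' *v y) + norm (transpose dW *v y)"
    using norm_triangle_ineq4[of "transpose W' *v y" "transpose dW *v y"]
    by (simp add: transpose_add matrix_vector_mult_add_rdistrib)
  also have "norm (transpose dW *v y) \<le> spec_norm dW * norm y"
    by (rule norm_transpose_mult_vec_le_spec_norm)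
  finally have "\<eta> * norm (transpose W *v y) \<le> \<eta> * (norm (transpose W' *v y) + spec_norm dW * norm y)"
    using eta_pos by (intro mult_left_mono) simp_all
  then have "(1 - \<xi>) * norm y \<le> \<eta> * norm (transpose W' *v y)"
    using norm_le_spec_norm_pinv_mult[OF W_right_inverse, of y] by (simp add: algebra_simps)
  then show ?thesis using eta_pos by (simp add: field_simps)
qed

lemma perturbed_scale_pos: "0 < (1 - \<xi>) / \<eta>"
  using xi_less_1 eta_pos by simp

lemma W'_right_inverse: "W' ** pinv W' = mat 1"
  and P_symmetric: "transpose P = P"
  using pinv_full_row_rank[OF inj_transpose_if_bounded_below[OF perturbed_scale_pos perturbed_bounded_below]]
  by simp_all

lemma P_idempotent: "P ** P = P"
  by (metis W'_right_inverse matrix_mul_assoc matrix_mul_rid)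

lemma spec_norm_pinv_W'_le: "spec_norm (pinv W') \<le> \<eta> / (1 - \<xi>)"
  using spec_norm_pinv_le[OF perturbed_scale_pos perturbed_bounded_below] by simp

lemma F_eq_perturbed: "F = C ** W' - D"
  by (simp add: matrix_add_ldistrib)

lemma residual_eq: "F - X' ** W' = - (D - D ** P)"
proof -
  have "X' ** W' = C ** W' - D ** P"
    by (subst F_eq_perturbed) (simp add: matrix_diff_rdistrib matrix_mul_assoc[symmetric] W'_right_inverse)
  then show ?thesis by (subst (1) F_eq_perturbed) simp
qed

lemma X'_eq: "X' = C - D ** P ** pinv W'"
proof -
  have "X' = C ** (W' ** pinv W') - D ** pinv W'"
    by (subst F_eq_perturbed) (simp add: matrix_diff_rdistrib matrix_mul_assoc)
  also have "D ** pinv W' = D ** P ** pinv W'"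
    by (metis W'_right_inverse matrix_mul_assoc matrix_mul_rid)
  finally show ?thesis by (simp add: W'_right_inverse)
qed

lemma norm_X'_le: "norm X' \<le> norm C + norm (D ** P) * (\<eta> / (1 - \<xi>))"
proof -
  have "norm X' \<le> norm C + norm (D ** P ** pinv W')"
    unfolding X'_eq by (rule norm_triangle_ineq4)
  also have "norm (D ** P ** pinv W') \<le> norm (D ** P) * (\<eta> / (1 - \<xi>))"
    using norm_matrix_mult_le_spec_norm[of "D ** P" "pinv W'"] spec_norm_pinv_W'_le
    by (meson mult_left_mono norm_ge_zero order_trans)
  finally show ?thesis by simp
qed

lemma norm_D_split: "(norm (D ** P))^2 + (norm (D - D ** P))^2 \<le> (norm C * spec_norm dW)^2"
  unfolding norm_power2_orthogonal_projection[OF P_symmetric P_idempotent, symmetric]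
  by (intro power_mono norm_matrix_mult_le_spec_norm) simp

lemma norm_fit_power2: "(norm (X' ** W'))^2 = (norm F)^2 - (norm (D - D ** P))^2"
proof -
  have "X' ** W' = F ** P" by (simp add: matrix_mul_assoc)
  moreover have "norm (F - F ** P) = norm (D - D ** P)"
    using residual_eq by (simp add: matrix_mul_assoc norm_minus_commute)
  ultimately show ?thesis
    using norm_power2_orthogonal_projection[OF P_symmetric P_idempotent, of F] by simp
qed

lemma norm_C_le: "norm C \<le> norm F * \<eta>"
  using norm_matrix_mult_le_spec_norm[of F "pinv W"]
  by (simp add: matrix_mul_assoc[symmetric] W_right_inverse)

lemma norm_dW_le: "norm dW \<le> \<xi> * norm W"
proof -
  have "norm (dW $ i) \<le> \<xi> * norm (W $ i)" for i
  proof -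
    have "1 \<le> \<eta> * norm (W $ i)"
      using norm_le_spec_norm_pinv_mult[OF W_right_inverse, of "axis i 1"]
      by (simp add: row_eq_transpose_mult_axis[of W i])
    then have "spec_norm dW \<le> \<xi> * norm (W $ i)"
      using spec_norm_nonneg[of dW] mult_left_mono by (fastforce simp: mult_ac)
    then show ?thesis using norm_row_le_spec_norm[of dW i] by linarith
  qed
  then have "(norm dW)^2 \<le> (\<xi> * norm W)^2"
    unfolding norm_power2_eq_sum_rows[of dW] power_mult_distrib norm_power2_eq_sum_rows[of W] sum_distrib_left
    by (intro sum_mono) (metis norm_ge_zero power_mono power_mult_distrib)
  then show ?thesis by (rule power2_le_imp_le) (simp add: xi_nonneg)
qed

lemma norm_F_pos: "0 < norm F"
proof -
  have "0 < norm F * \<eta>" using norm_C_le C_nonzero by (meson less_le_trans zero_less_norm_iff)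
  then show ?thesis using eta_pos by (simp add: zero_less_mult_iff)
qed

lemma norm_W_pos: "0 < norm W"
proof -
  have "(mat 1 :: real^'r^'r) \<noteq> 0"
    by (auto simp: vec_eq_iff mat_def)
  then have "W \<noteq> 0" using W_right_inverse by auto
  then show ?thesis by simp
qed

lemma epsilon'_le:
  "(norm (F - X' ** W'))^2 / (norm (X' ** W'))^2 + 1 \<le> \<xi>^2 / (1 - \<xi>)^2 + 1"
proof -
  let ?q = "norm (D - D ** P)"
  have "?q^2 \<le> (norm C * spec_norm dW)^2"
    using norm_D_split zero_le_power2[of "norm (D ** P)"] by linarith
  then have "?q \<le> norm C * spec_norm dW"
    by (rule power2_le_imp_le) (simp add: spec_norm_nonneg)
  also have "\<dots> \<le> \<xi> * norm F"
    using mult_right_mono[OF norm_C_le spec_norm_nonneg[of dW]] by (simp add: mult_ac)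
  finally have "?q^2 / ((norm F)^2 - ?q^2) \<le> \<xi>^2 / (1 - \<xi>)^2"
    using norm_F_pos xi_nonneg xi_less_1 by (intro ratio_power2_le) simp_all
  then show ?thesis
    by (simp add: norm_fit_power2 residual_eq norm_minus_commute)
qed

lemma gamma'_le:
  "(norm X')^2 * (norm W')^2 / (norm (X' ** W'))^2
     \<le> (norm C)^2 * (norm W)^2 / (norm F)^2 * (1 + norm dW / norm W)^2 * (1 + 2 * \<xi> / (1 - \<xi>))^2"
proof -
  let ?q = "norm (D - D ** P)"
  have coefficients: "(norm X')^2 / ((norm F)^2 - ?q^2)
      \<le> (norm C)^2 / (norm F)^2 * ((1 + \<xi>) / (1 - \<xi>))^2"
    using norm_D_split norm_C_le norm_X'_le xi_less_1
    by (intro coefficient_ratio_le[where p = "norm (D ** P)" and e = "spec_norm dW"])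
      (simp_all add: norm_ge_zero eta_pos spec_norm_nonneg C_nonzero)
  have "norm W + norm dW = norm W * (1 + norm dW / norm W)"
    using norm_W_pos by (simp add: field_simps)
  then have "norm W' \<le> norm W * (1 + norm dW / norm W)"
    using norm_triangle_ineq[of W dW] by linarith
  then have weights: "(norm W')^2 \<le> (norm W)^2 * (1 + norm dW / norm W)^2"
    by (metis norm_ge_zero power_mono power_mult_distrib)
  have "1 + 2 * \<xi> / (1 - \<xi>) = (1 + \<xi>) / (1 - \<xi>)"
    using xi_less_1 by (simp add: field_simps)
  moreover have "(norm X')^2 * (norm W')^2 / ((norm F)^2 - ?q^2)
      \<le> (norm C)^2 / (norm F)^2 * ((1 + \<xi>) / (1 - \<xi>))^2 * ((norm W)^2 * (1 + norm dW / norm W)^2)"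
    using mult_mono[OF coefficients weights]
    by (simp add: mult_ac)
  ultimately show ?thesis
    by (simp add: norm_fit_power2 mult_ac)
qed

lemma gamma_bound_le:
  "(norm C)^2 * (norm W)^2 / (norm F)^2 * (1 + norm dW / norm W)^2 * (1 + 2 * \<xi> / (1 - \<xi>))^2
     \<le> (norm C)^2 * (norm W)^2 / (norm F)^2 * (1 + \<xi>)^4 / (1 - \<xi>)^2"
    (is "?\<gamma> * _ * _ \<le> _")
proof -
  have "norm dW / norm W \<le> \<xi>"
    using norm_dW_le norm_W_pos by (simp add: divide_le_eq)
  then have "?\<gamma> * (1 + norm dW / norm W)^2 * (1 + 2 * \<xi> / (1 - \<xi>))^2
      \<le> ?\<gamma> * (1 + \<xi>)^2 * (1 + 2 * \<xi> / (1 - \<xi>))^2"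
    by (intro mult_right_mono mult_left_mono power_mono) auto
  also have "\<dots> = ?\<gamma> * (1 + \<xi>)^4 / (1 - \<xi>)^2"
    using xi_less_1 by (simp add: field_simps power_divide flip: power_add)
  finally show ?thesis .
qed

end

theorem corollary3:
  fixes label :: "'n::finite \<Rightarrow> 'k::finite"
    and g :: "'r::finite \<Rightarrow> 'n"
    and W dW :: "real^'n^'r"
  assumes balanced_samples: "\<And>k k'. card {j. label j = k} = card {j. label j = k'}"
    and basis_subset: "inj g"
    and r_le_n: "CARD('r) \<le> CARD('n)"
    and balanced_basis: "\<And>k k'. card {i. label (g i) = k} = card {i. label (g i) = k'}"
    and basis_nonempty: "\<And>k. card {i. label (g i) = k} \<ge> 1"
    and W_nonneg: "\<And>i j. W $ i $ j \<ge> 0"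
    and W_colsum: "\<And>j. (\<Sum>i\<in>UNIV. W $ i $ j) = 1"
    and W_rank: "rank W = CARD('r)"
    and W_support: "\<And>i j. label (g i) \<noteq> label j \<Longrightarrow> W $ i $ j = 0"
    and xi_lt: "spec_norm (pinv W) * spec_norm dW < 1"
  shows
    "let F = indicator_mat label;
         W' = W + dW;
         \<xi> = spec_norm (pinv W) * spec_norm dW;
         \<delta> = frob_norm dW / frob_norm W;
         X = F ** pinv W;
         X' = F ** pinv W';
         \<gamma> = (frob_norm X)^2 * (frob_norm W)^2 / (frob_norm (X ** W))^2;
         \<epsilon>' = (frob_norm (F - X' ** W'))^2 / (frob_norm (X' ** W'))^2 + 1;
         \<gamma>' = (frob_norm X')^2 * (frob_norm W')^2 / (frob_norm (X' ** W'))^2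
     in \<epsilon>' \<le> \<xi>^2 / (1 - \<xi>)^2 + 1
        \<and> \<gamma>' \<le> \<gamma> * (1 + \<delta>)^2 * (1 + 2 * \<xi> / (1 - \<xi>))^2
        \<and> \<gamma> * (1 + \<delta>)^2 * (1 + 2 * \<xi> / (1 - \<xi>))^2 \<le> \<gamma> * (1 + \<xi>)^4 / (1 - \<xi>)^2"
proof -
  let ?F\<^sub>G = "indicator_mat (label \<circ> g)"
  have F_eq: "indicator_mat label = ?F\<^sub>G ** W"
    using W_colsum W_support by (rule indicator_mat_eq_mult)
  have "inj ((*v) (transpose W))"
    using W_rank full_rank_injective[of "transpose W"] by (simp add: rank_transpose)
  then have perturbation: "pinv_perturbation ?F\<^sub>G W dW"
    using indicator_mat_nonzero xi_lt by unfold_locales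
  have X_eq: "?F\<^sub>G ** W ** pinv W = ?F\<^sub>G"
    by (simp flip: matrix_mul_assoc add: pinv_perturbation.W_right_inverse[OF perturbation])
  show ?thesis
    unfolding Let_def frob_norm_eq_norm F_eq X_eq
    using pinv_perturbation.epsilon'_le[OF perturbation] pinv_perturbation.gamma'_le[OF perturbation]
      pinv_perturbation.gamma_bound_le[OF perturbation]
    by blast
qed

end
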